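(* Let $n\ge2$ and let $X_1,\dots,X_n$ be independent normal random variables with means $\mu_1,\dots,\mu_n\ge0$. Then $$\mathbb{E}\max(X_1,\dots,X_n)\ge(1-2^{1-n})\,\mathbb{E}\max(0,X_1,\dots,X_n).$$ *)

theory Defs
  imports "HOL-Probability.Probability"
begin

end

theory Submission
  imports Defs
begin

text \<open>
  Write \<open>m = max X\<^sub>1 \<dots> X\<^sub>n\<close>, so that \<open>E m = E m\<^sup>+ - E m\<^sup>-\<close>. The negative part
  \<open>m\<^sup>-\<close> is at most \<open>X\<^sub>1\<^sup>-\<close> times the indicator that all other \<open>X\<^sub>i\<close> are negative,
  hence by independence \<open>E m\<^sup>- \<le> E X\<^sub>1\<^sup>- \<cdot> \<Prod>\<^sub>i\<^sub>\<ge>\<^sub>2 P(X\<^sub>i < 0)\<close>. A normal variable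
  with nonnegative mean is negative with probability at most \<open>1/2\<close>, and
  \<open>E X\<^sub>1\<^sup>- \<le> E X\<^sub>1\<^sup>+ \<le> E m\<^sup>+\<close> because \<open>E X\<^sub>1 \<ge> 0\<close>. So \<open>E m\<^sup>- \<le> 2\<^sup>1\<^sup>-\<^sup>n E m\<^sup>+\<close>.
\<close>

lemma Max_neg_part_le_prod_indicator:
  fixes f :: "'i \<Rightarrow> real"
  assumes "finite S" and "j \<in> S"
  shows "max 0 (- Max (f ` S)) \<le> max 0 (- f j) * (\<Prod>i\<in>S - {j}. indicator {..<0} (f i))"
proof (cases "Max (f ` S) < 0")
  case True
  have le_Max: "f i \<le> Max (f ` S)" if "i \<in> S" for i
    using assms(1) that by simp
  have "(\<Prod>i\<in>S - {j}. indicator {..<0} (f i) :: real) = 1"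
    using True le_Max by (intro prod.neutral) (auto simp: indicator_def intro: le_less_trans)
  then show ?thesis
    using le_Max[OF assms(2)] by simp
next
  case False
  then show ?thesis
    by (simp add: prod_nonneg)
qed

lemma integrable_Max:
  fixes f :: "'i \<Rightarrow> 'a \<Rightarrow> real"
  assumes "finite S" and "S \<noteq> {}" and "\<And>i. i \<in> S \<Longrightarrow> integrable M (f i)"
  shows "integrable M (\<lambda>x. Max ((\<lambda>i. f i x) ` S))"
  using assms
proof (induction S rule: finite_ne_induct)
  case (singleton i)
  then show ?case by simp
next
  case (insert i S)
  then show ?case
    by (simp add: Max_insert image_insert)
qed

lemma integral_eq_pos_part_minus_neg_part:
  fixes f :: "'a \<Rightarrow> real"
  assumes "integrable M f"
  shows "integral\<^sup>L M f = (\<integral>x. max 0 (f x) \<partial>M) - (\<integral>x. max 0 (- f x) \<partial>M)"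
proof -
  have "integral\<^sup>L M f = (\<integral>x. max 0 (f x) - max 0 (- f x) \<partial>M)"
    by (intro Bochner_Integration.integral_cong) auto
  also have "\<dots> = (\<integral>x. max 0 (f x) \<partial>M) - (\<integral>x. max 0 (- f x) \<partial>M)"
    using assms by (intro Bochner_Integration.integral_diff) auto
  finally show ?thesis .
qed

lemma (in prob_space) normal_prob_neg_le_half:
  assumes X: "distributed M lborel X (normal_density \<mu> \<sigma>)" and "0 < \<sigma>" and "0 \<le> \<mu>"
  shows "prob {\<omega>\<in>space M. X \<omega> < 0} \<le> 1/2"
proof -
  have [measurable]: "X \<in> borel_measurable M"
    using distributed_measurable[OF X] by simp
  have reflected: "distributed M lborel (\<lambda>\<omega>. 2 * \<mu> + (-1) * X \<omega>) (normal_density \<mu> \<sigma>)"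
    using normal_density_affine[OF X \<open>0 < \<sigma>\<close>, of "-1" "2 * \<mu>"] by simp
  have "emeasure M (X -` {..<0} \<inter> space M)
      = emeasure M ((\<lambda>\<omega>. 2 * \<mu> + (-1) * X \<omega>) -` {..<0} \<inter> space M)"
    using distributed_emeasure[OF X, of "{..<0}"] distributed_emeasure[OF reflected, of "{..<0}"]
    by simp
  then have "prob {\<omega>\<in>space M. X \<omega> < 0} = prob {\<omega>\<in>space M. 2 * \<mu> < X \<omega>}"
    unfolding measure_def by (simp add: vimage_def Int_def conj_commute)
  also have "\<dots> \<le> prob {\<omega>\<in>space M. \<not> X \<omega> < 0}"
    using \<open>0 \<le> \<mu>\<close> by (intro finite_measure_mono) auto
  also have "\<dots> = 1 - prob {\<omega>\<in>space M. X \<omega> < 0}"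
    by (rule prob_neg) simp
  finally show ?thesis by simp
qed

lemma (in prob_space) expectation_neg_part_Max_le:
  assumes indep: "indep_vars (\<lambda>_. borel) X S" and "finite S" and "j \<in> S"
    and int: "\<And>i. i \<in> S \<Longrightarrow> integrable M (X i)"
  shows "expectation (\<lambda>\<omega>. max 0 (- Max ((\<lambda>i. X i \<omega>) ` S)))
    \<le> expectation (\<lambda>\<omega>. max 0 (- X j \<omega>)) * (\<Prod>i\<in>S - {j}. prob {\<omega>\<in>space M. X i \<omega> < 0})"
proof -
  have [measurable]: "X i \<in> borel_measurable M" if "i \<in> S" for i
    using int[OF that] by simp
  define g where "g i = (if i = j then (\<lambda>x. max 0 (- x)) else indicator {..<0} :: real \<Rightarrow> real)"
    for i
  have indep_g: "indep_vars (\<lambda>_. borel) (\<lambda>i \<omega>. g i (X i \<omega>)) S"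
    by (rule indep_vars_compose2[OF indep]) (simp add: g_def)
  have int_g: "integrable M (\<lambda>\<omega>. g i (X i \<omega>))" if "i \<in> S" for i
  proof (cases "i = j")
    case True
    then show ?thesis using int[OF that] by (simp add: g_def)
  next
    case False
    have "(\<lambda>\<omega>. indicator {..<0} (X i \<omega>) :: real) \<in> borel_measurable M"
      using that by measurable
    then show ?thesis
      using False by (intro integrable_const_bound[where B=1]) (auto simp: g_def indicator_def)
  qed
  have expectation_g: "expectation (\<lambda>\<omega>. g i (X i \<omega>)) = prob {\<omega>\<in>space M. X i \<omega> < 0}"
    if "i \<in> S - {j}" for i
  proof -
    from that have "i \<in> S" by simp
    then have "{\<omega>\<in>space M. X i \<omega> < 0} \<in> events"
      by measurable
    moreover have "expectation (\<lambda>\<omega>. g i (X i \<omega>))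
        = expectation (indicator {\<omega>\<in>space M. X i \<omega> < 0})"
      using that by (intro Bochner_Integration.integral_cong) (auto simp: g_def indicator_def)
    ultimately show ?thesis by simp
  qed
  have "expectation (\<lambda>\<omega>. max 0 (- Max ((\<lambda>i. X i \<omega>) ` S)))
      \<le> expectation (\<lambda>\<omega>. \<Prod>i\<in>S. g i (X i \<omega>))"
  proof (rule integral_mono)
    have "integrable M (\<lambda>\<omega>. Max ((\<lambda>i. X i \<omega>) ` S))"
      using \<open>j \<in> S\<close> by (intro integrable_Max[OF \<open>finite S\<close>] int) auto
    then show "integrable M (\<lambda>\<omega>. max 0 (- Max ((\<lambda>i. X i \<omega>) ` S)))"
      by auto
    show "integrable M (\<lambda>\<omega>. \<Prod>i\<in>S. g i (X i \<omega>))"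
      by (rule indep_vars_integrable[OF \<open>finite S\<close> indep_g int_g])
    show "max 0 (- Max ((\<lambda>i. X i \<omega>) ` S)) \<le> (\<Prod>i\<in>S. g i (X i \<omega>))" for \<omega>
      using Max_neg_part_le_prod_indicator[OF \<open>finite S\<close> \<open>j \<in> S\<close>, of "\<lambda>i. X i \<omega>"]
        \<open>finite S\<close> \<open>j \<in> S\<close>
      by (simp add: prod.remove g_def image_image)
  qed
  also have "\<dots> = (\<Prod>i\<in>S. expectation (\<lambda>\<omega>. g i (X i \<omega>)))"
    by (rule indep_vars_lebesgue_integral[OF \<open>finite S\<close> indep_g int_g])
  also have "\<dots> = expectation (\<lambda>\<omega>. max 0 (- X j \<omega>))
      * (\<Prod>i\<in>S - {j}. prob {\<omega>\<in>space M. X i \<omega> < 0})"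
    using \<open>finite S\<close> \<open>j \<in> S\<close> expectation_g by (simp add: prod.remove g_def)
  finally show ?thesis .
qed

lemma (in prob_space) expectation_Max_ge:
  assumes indep: "indep_vars (\<lambda>_. borel) X S" and "finite S" and "j \<in> S"
    and int: "\<And>i. i \<in> S \<Longrightarrow> integrable M (X i)"
    and "0 \<le> expectation (X j)"
    and prob_neg: "\<And>i. i \<in> S - {j} \<Longrightarrow> prob {\<omega>\<in>space M. X i \<omega> < 0} \<le> q"
  shows "(1 - q ^ (card S - 1)) * expectation (\<lambda>\<omega>. max 0 (Max ((\<lambda>i. X i \<omega>) ` S)))
    \<le> expectation (\<lambda>\<omega>. Max ((\<lambda>i. X i \<omega>) ` S))"
proof -
  define m where "m \<omega> = Max ((\<lambda>i. X i \<omega>) ` S)" for \<omega>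
  have "integrable M m"
    unfolding m_def using \<open>j \<in> S\<close> by (intro integrable_Max[OF \<open>finite S\<close>] int) auto
  have "max 0 (X j \<omega>) \<le> max 0 (m \<omega>)" for \<omega>
    unfolding m_def using \<open>finite S\<close> \<open>j \<in> S\<close> by (intro max.mono) auto
  then have pos_part_le: "expectation (\<lambda>\<omega>. max 0 (X j \<omega>)) \<le> expectation (\<lambda>\<omega>. max 0 (m \<omega>))"
    using int[OF \<open>j \<in> S\<close>] \<open>integrable M m\<close> by (intro integral_mono) auto
  have "(\<Prod>i\<in>S - {j}. prob {\<omega>\<in>space M. X i \<omega> < 0}) \<le> (\<Prod>i\<in>S - {j}. q)"
    using prob_neg by (intro prod_mono) auto
  also have "\<dots> = q ^ (card S - 1)"
    using \<open>finite S\<close> \<open>j \<in> S\<close> by simp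
  finally have prod_le: "(\<Prod>i\<in>S - {j}. prob {\<omega>\<in>space M. X i \<omega> < 0}) \<le> q ^ (card S - 1)" .
  then have "0 \<le> q ^ (card S - 1)"
    by (meson measure_nonneg order_trans prod_nonneg)
  have "expectation (\<lambda>\<omega>. max 0 (- m \<omega>))
      \<le> expectation (\<lambda>\<omega>. max 0 (- X j \<omega>)) * (\<Prod>i\<in>S - {j}. prob {\<omega>\<in>space M. X i \<omega> < 0})"
    unfolding m_def by (rule expectation_neg_part_Max_le[OF indep \<open>finite S\<close> \<open>j \<in> S\<close> int])
  also have "\<dots> \<le> expectation (\<lambda>\<omega>. max 0 (X j \<omega>)) * q ^ (card S - 1)"
  proof (rule mult_mono[OF _ prod_le])
    show "expectation (\<lambda>\<omega>. max 0 (- X j \<omega>)) \<le> expectation (\<lambda>\<omega>. max 0 (X j \<omega>))"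
      using integral_eq_pos_part_minus_neg_part[OF int[OF \<open>j \<in> S\<close>]] \<open>0 \<le> expectation (X j)\<close>
      by linarith
  qed (simp_all add: prod_nonneg)
  also have "\<dots> \<le> expectation (\<lambda>\<omega>. max 0 (m \<omega>)) * q ^ (card S - 1)"
    using pos_part_le \<open>0 \<le> q ^ (card S - 1)\<close> by (rule mult_right_mono)
  finally show ?thesis
    using integral_eq_pos_part_minus_neg_part[OF \<open>integrable M m\<close>]
    unfolding m_def by (simp add: algebra_simps)
qed

theorem lemma9:
  fixes M :: "'a measure" and X :: "nat \<Rightarrow> 'a \<Rightarrow> real"
    and \<mu> \<sigma> :: "nat \<Rightarrow> real" and n :: nat
  assumes "prob_space M"
    and "n \<ge> 2"
    and "prob_space.indep_vars M (\<lambda>_. borel) X {1..n}"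
    and "\<And>i. i \<in> {1..n} \<Longrightarrow> 0 < \<sigma> i"
    and "\<And>i. i \<in> {1..n} \<Longrightarrow> 0 \<le> \<mu> i"
    and "\<And>i. i \<in> {1..n} \<Longrightarrow> distributed M lborel (X i) (normal_density (\<mu> i) (\<sigma> i))"
  shows "prob_space.expectation M (\<lambda>\<omega>. Max ((\<lambda>i. X i \<omega>) ` {1..n}))
           \<ge> (1 - 2 powr (1 - real n)) *
             prob_space.expectation M (\<lambda>\<omega>. max 0 (Max ((\<lambda>i. X i \<omega>) ` {1..n})))"
proof -
  interpret prob_space M by (rule assms(1))
  have int: "integrable M (X i)" if "i \<in> {1..n}" for i
    using that assms(4,6)
    by (intro distributed_integrable_var[OF assms(6)] integrable_normal_moment_nz_1) auto
  have "0 \<le> expectation (X 1)"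
    using assms(2,4,5,6) normal_distributed_expectation[of "\<sigma> 1" "X 1" "\<mu> 1"] by simp
  moreover have "prob {\<omega>\<in>space M. X i \<omega> < 0} \<le> 1/2" if "i \<in> {1..n} - {1}" for i
    using that assms(4,5,6) by (intro normal_prob_neg_le_half) auto
  moreover have "2 powr (1 - real n) = (1/2) ^ (card {1..n} - 1)"
    using assms(2) by (cases n) (simp_all add: powr_minus_divide powr_realpow power_one_over)
  ultimately show ?thesis
    using expectation_Max_ge[OF assms(3) _ _ int, of 1 "1/2"] assms(2) by simp
qed

end
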